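(* Let $\mathcal{X}$ be an input space, $P$ a real normed vector space (the parameter space) with norm $\|\cdot\|$, and $\mathcal{T}:\mathcal{X}\times P\to\mathcal{X}$ a transformation satisfying $\mathcal{T}(x,0)=x$ and $\mathcal{T}(\mathcal{T}(x,\theta_1),\theta_2)=\mathcal{T}(x,\theta_1+\theta_2)$ for all $x\in\mathcal{X}$, $\theta_1,\theta_2\in P$. Define $d_{\mathcal{T}}(x_1,x_2)=\min\{\|\theta\| : \mathcal{T}(x_1,\theta)=x_2\}$ if some $\theta$ with $\mathcal{T}(x_1,\theta)=x_2$ exists, and $d_{\mathcal{T}}(x_1,x_2)=\infty$ otherwise. Let $\mathcal{Q}(0)$ be a probability distribution on $P$, and for $\theta\in P$ let $\mathcal{Q}(\theta)$ be the distribution of $\theta+\delta$ with $\delta\sim\mathcal{Q}(0)$; assume $\mathrm{TV}(\mathcal{Q}(0),\mathcal{Q}(\theta))\le\psi(\|\theta\|)$ for all $\theta\in P$, for a concave function $\psi$. Define the smoothing distribution $\mathcal{S}(x)$ as the distribution of $\mathcal{T}(x,\delta)$ with $\delta\sim\mathcal{Q}(0)$. Then for any $x_1,x_2\in\mathcal{X}$ with $d_{\mathcal{T}}(x_1,x_2)$ finite, \[\mathrm{TV}(\mathcal{S}(x_1),\mathcal{S}(x_2))\le \psi(d_{\mathcal{T}}(x_1,x_2)).\]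
   Context: $\mathrm{TV}$ denotes the total variation distance between probability distributions. *)

theory Defs
  imports "HOL-Probability.Probability"
begin

definition tv_dist :: "'a measure \<Rightarrow> 'a measure \<Rightarrow> real" where
  "tv_dist M N = (SUP A\<in>sets M. \<bar>measure M A - measure N A\<bar>)"

text \<open>Transformation-based distance d_T(x1,x2): the least norm of a parameter
  theta with T x1 theta = x2, and infinity if no such parameter exists.
  (The minimum is written as an infimum; where the paper's min exists they agree.)\<close>
definition d_T :: "('x \<Rightarrow> 'p::real_normed_vector \<Rightarrow> 'x) \<Rightarrow> 'x \<Rightarrow> 'x \<Rightarrow> ereal" where
  "d_T T x1 x2 = (if \<exists>\<theta>. T x1 \<theta> = x2
                   then ereal (Inf {norm \<theta> | \<theta>. T x1 \<theta> = x2}) else \<infinity>)"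

definition shifted :: "'p::real_normed_vector measure \<Rightarrow> 'p \<Rightarrow> 'p measure" where
  "shifted Q0 \<theta> = distr Q0 borel (\<lambda>\<delta>. \<theta> + \<delta>)"

definition smoothing :: "'x measure \<Rightarrow> ('x \<Rightarrow> 'p \<Rightarrow> 'x) \<Rightarrow> 'p measure \<Rightarrow> 'x \<Rightarrow> 'x measure" where
  "smoothing MX T Q0 x = distr Q0 MX (T x)"

end

theory Submission
  imports Defs
begin

text \<open>If \<open>T x1 t = x2\<close>, the group-action law shows that \<open>S(x2)\<close> is the image of
  \<open>Q(t)\<close> under \<open>T x1\<close>, just as \<open>S(x1)\<close> is the image of \<open>Q(0)\<close>. Total variation
  cannot grow under a common measurable map, so \<open>TV(S(x1), S(x2)) \<le> TV(Q(0), Q(t)) \<le> \<psi> \<parallel>t\<parallel>\<close>;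
  choosing \<open>t\<close> of minimal norm gives \<open>\<psi>(d_T(x1, x2))\<close>.\<close>

lemma tv_dist_distr_le:
  assumes "finite_measure M" "finite_measure N" "sets N = sets M"
    and f: "f \<in> M \<rightarrow>\<^sub>M K"
  shows "tv_dist (distr M K f) (distr N K f) \<le> tv_dist M N"
  unfolding tv_dist_def
proof (rule cSUP_least)
  interpret M: finite_measure M by fact
  interpret N: finite_measure N by fact
  have fN: "f \<in> N \<rightarrow>\<^sub>M K"
    using f measurable_cong_sets[OF assms(3) refl] by blast
  have bdd: "bdd_above ((\<lambda>A. \<bar>measure M A - measure N A\<bar>) ` sets M)"
  proof (rule bdd_aboveI2)
    fix A
    have "measure M A \<le> measure M (space M)" "measure N A \<le> measure N (space N)"
      using M.bounded_measure N.bounded_measure by auto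
    then show "\<bar>measure M A - measure N A\<bar> \<le> measure M (space M) + measure N (space N)"
      using measure_nonneg[of M A] measure_nonneg[of N A] by linarith
  qed
  fix A assume "A \<in> sets (distr M K f)"
  then have A: "A \<in> sets K" by simp
  have pre: "f -` A \<inter> space M \<in> sets M"
    using measurable_sets[OF f A] .
  have "space N = space M"
    using sets_eq_imp_space_eq[OF assms(3)] .
  then show "\<bar>measure (distr M K f) A - measure (distr N K f) A\<bar>
      \<le> (SUP A\<in>sets M. \<bar>measure M A - measure N A\<bar>)"
    using cSUP_upper[OF pre bdd] by (simp add: measure_distr[OF f A] measure_distr[OF fN A])
qed auto

lemma d_T_eq_norm_minimizer:
  assumes "T x1 t = x2" and "\<And>t'. T x1 t' = x2 \<Longrightarrow> norm t \<le> norm t'"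
  shows "d_T T x1 x2 = ereal (norm t)"
proof -
  have "Inf {norm \<theta> | \<theta>. T x1 \<theta> = x2} = norm t"
    by (rule cInf_eq_minimum) (use assms in auto)
  then show ?thesis
    unfolding d_T_def using assms(1) by auto
qed

lemma smoothing_action_eq_distr_shifted:
  assumes "sets Q0 = sets borel" and T_meas: "T x \<in> borel \<rightarrow>\<^sub>M MX"
    and T_add: "\<And>\<theta>. T (T x t) \<theta> = T x (t + \<theta>)"
  shows "smoothing MX T Q0 (T x t) = distr (shifted Q0 t) MX (T x)"
proof -
  have "(\<lambda>\<delta>. t + \<delta>) \<in> Q0 \<rightarrow>\<^sub>M borel"
    unfolding measurable_cong_sets[OF assms(1) refl] by measurable
  moreover have "T (T x t) = T x \<circ> (\<lambda>\<delta>. t + \<delta>)"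
    by (auto simp: T_add)
  ultimately show ?thesis
    unfolding smoothing_def shifted_def by (simp add: distr_distr[OF T_meas])
qed

theorem lemma1:
  fixes MX :: "'x measure"
    and T :: "'x \<Rightarrow> 'p::real_normed_vector \<Rightarrow> 'x"
    and Q0 :: "'p measure"
    and \<psi> :: "real \<Rightarrow> real"
    and x1 x2 :: 'x
  assumes T_meas: "\<And>x. x \<in> space MX \<Longrightarrow> T x \<in> borel \<rightarrow>\<^sub>M MX"
    and T_zero: "\<And>x. x \<in> space MX \<Longrightarrow> T x 0 = x"
    and T_add: "\<And>x \<theta>1 \<theta>2. x \<in> space MX \<Longrightarrow> T (T x \<theta>1) \<theta>2 = T x (\<theta>1 + \<theta>2)"
    and Q0_prob: "prob_space Q0"
    and Q0_sets: "sets Q0 = sets borel"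
    and TV_bound: "\<And>\<theta>. tv_dist Q0 (shifted Q0 \<theta>) \<le> \<psi> (norm \<theta>)"
    and \<psi>_concave: "concave_on {0..} \<psi>"
    and x1: "x1 \<in> space MX" and x2: "x2 \<in> space MX"
    and min_exists: "\<exists>\<theta>. T x1 \<theta> = x2 \<and> (\<forall>\<theta>'. T x1 \<theta>' = x2 \<longrightarrow> norm \<theta> \<le> norm \<theta>')"
  shows "tv_dist (smoothing MX T Q0 x1) (smoothing MX T Q0 x2) \<le> \<psi> (real_of_ereal (d_T T x1 x2))"
proof -
  obtain t where t: "T x1 t = x2" and t_min: "\<And>t'. T x1 t' = x2 \<Longrightarrow> norm t \<le> norm t'"
    using min_exists by blast
  interpret Q: prob_space Q0 by (fact Q0_prob)
  have shift_meas: "(\<lambda>\<delta>. t + \<delta>) \<in> Q0 \<rightarrow>\<^sub>M borel"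
    unfolding measurable_cong_sets[OF Q0_sets refl] by measurable
  have shift_finite: "finite_measure (shifted Q0 t)"
    unfolding shifted_def using Q.prob_space_distr[OF shift_meas] by (rule prob_space.axioms(1))
  have shift_sets: "sets (shifted Q0 t) = sets Q0"
    unfolding shifted_def by (simp add: Q0_sets)
  have T_x1: "T x1 \<in> Q0 \<rightarrow>\<^sub>M MX"
    using T_meas[OF x1] unfolding measurable_cong_sets[OF Q0_sets refl] .
  have "smoothing MX T Q0 x2 = distr (shifted Q0 t) MX (T x1)"
    using smoothing_action_eq_distr_shifted[OF Q0_sets T_meas[OF x1] T_add[OF x1, of t]]
    unfolding t .
  then have "tv_dist (smoothing MX T Q0 x1) (smoothing MX T Q0 x2) \<le> tv_dist Q0 (shifted Q0 t)"
    unfolding smoothing_def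
    using tv_dist_distr_le[OF Q.finite_measure_axioms shift_finite shift_sets T_x1] by simp
  also have "\<dots> \<le> \<psi> (norm t)" by (fact TV_bound)
  finally show ?thesis
    using d_T_eq_norm_minimizer[of T x1 t x2, OF t t_min] by simp
qed

end
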